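(* Let $T$ be a compactum and $A$ a discrete set of entourages of $T$. Then for all $\mathbf a,\mathbf b\in A$ and every integer $k\ge1$ the set $\Psi_k(\mathbf a,\mathbf b)=\{\mathbf c\in A:\ \mathbf a-\mathbf c-\mathbf b\ (k)\}$ is finite.
   Context: Let $T$ be a compact Hausdorff space, $S^2T$ the space of unordered pairs of points of $T$ (diagonal allowed), $\Delta^2T$ the diagonal. An entourage is a neighborhood of $\Delta^2T$ in $S^2T$. For an entourage $\mathbf e$, $\Delta_{\mathbf e}$ is the graph distance on $T$ of the graph with vertex set $T$ and edges the pairs in $\mathbf e$; $\Delta_{\mathbf e}(a,b)=\inf_{x\in a,y\in b}\Delta_{\mathbf e}(x,y)$. A set is $\mathbf e$-small if its $\Delta_{\mathbf e}$-diameter is $\le1$. Entourages $\mathbf a,\mathbf b$ are unlinked ($\mathbf a\bowtie\mathbf b$) if $T=a\cup b$ for some $\mathbf a$-small $a$ and $\mathbf b$-small $b$; otherwise linked ($\mathbf a\#\mathbf b$). Standing conventions: every entourage considered is linked with itself and $T$ has $\Delta_{\mathbf a}$-diameter $>4$. For $\mathbf a\bowtie\mathbf b$, $\mathrm{sh}_{\mathbf a}\mathbf b=\bigcap\{a: a\ \mathbf a\text{-small},\ T\setminus a\ \mathbf b\text{-small}\}$; $\mathbf a-\mathbf c-\mathbf b\ (k)$ means $\mathbf a\bowtie\mathbf c\bowtie\mathbf b$ and $\Delta_{\mathbf c}(\mathrm{sh}_{\mathbf c}\mathbf a,\mathrm{sh}_{\mathbf c}\mathbf b)>k$. A set $A$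 of entourages is discrete if for every entourage $\mathbf w$ only finitely many $\mathbf a\in A$ satisfy $\mathbf a\#\mathbf w$. *)

theory Defs
  imports "HOL-Analysis.Analysis" "HOL-Library.Extended_Nat"
begin

text \<open>Unordered pairs of points of T (the space S^2 T) are represented by symmetric
  subsets of T x T.  Since the quotient map T x T -> S^2 T is open, neighbourhoods of the
  diagonal of S^2 T correspond exactly to symmetric neighbourhoods of the diagonal of T x T.\<close>

definition entourage :: "('a::topological_space \<times> 'a) set \<Rightarrow> bool" where
  "entourage E \<longleftrightarrow> sym E \<and> (\<exists>W. open W \<and> {(x,x) | x. True} \<subseteq> W \<and> W \<subseteq> E)"

definition gdist :: "('a \<times> 'a) set \<Rightarrow> 'a \<Rightarrow> 'a \<Rightarrow> enat" where
  "gdist E x y = (INF n \<in> {n. ((\<lambda>u v. (u,v) \<in> E) ^^ n) x y}. enat n)"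

definition gdist_set :: "('a \<times> 'a) set \<Rightarrow> 'a set \<Rightarrow> 'a set \<Rightarrow> enat" where
  "gdist_set E a b = (INF x \<in> a. INF y \<in> b. gdist E x y)"

definition small :: "('a \<times> 'a) set \<Rightarrow> 'a set \<Rightarrow> bool" where
  "small E a \<longleftrightarrow> (\<forall>x\<in>a. \<forall>y\<in>a. gdist E x y \<le> 1)"

definition unlinked :: "('a \<times> 'a) set \<Rightarrow> ('a \<times> 'a) set \<Rightarrow> bool" where
  "unlinked A B \<longleftrightarrow> (\<exists>a b. UNIV = a \<union> b \<and> small A a \<and> small B b)"

abbreviation linked :: "('a \<times> 'a) set \<Rightarrow> ('a \<times> 'a) set \<Rightarrow> bool" where
  "linked A B \<equiv> \<not> unlinked A B"

definition sh :: "('a \<times> 'a) set \<Rightarrow> ('a \<times> 'a) set \<Rightarrow> 'a set" where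
  "sh A B = \<Inter>{a. small A a \<and> small B (UNIV - a)}"

definition between :: "('a \<times> 'a) set \<Rightarrow> ('a \<times> 'a) set \<Rightarrow> ('a \<times> 'a) set \<Rightarrow> nat \<Rightarrow> bool" where
  "between A C B k \<longleftrightarrow> unlinked A C \<and> unlinked C B \<and> gdist_set C (sh C A) (sh C B) > enat k"

definition admissible :: "('a::topological_space \<times> 'a) set \<Rightarrow> bool" where
  "admissible E \<longleftrightarrow> entourage E \<and> linked E E \<and> (\<exists>x y. gdist E x y > 4)"

definition discrete_ent :: "('a::topological_space \<times> 'a) set set \<Rightarrow> bool" where
  "discrete_ent S \<longleftrightarrow> (\<forall>W. admissible W \<longrightarrow> finite {E \<in> S. linked E W})"

definition Psi :: "('a \<times> 'a) set set \<Rightarrow> nat \<Rightarrow> ('a \<times> 'a) set \<Rightarrow> ('a \<times> 'a) set \<Rightarrow> ('a \<times> 'a) set set" where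
  "Psi S k A B = {C \<in> S. between A C B k}"

end

theory Submission
  imports Defs
begin

text \<open>
  Put W = A \<inter> B; it is again an admissible entourage.  Every C in
  Psi_k(A,B) is linked with W: if T = c \<union> w with c C-small and w W-small, then the
  complement of c is both A-small and B-small (W is contained in both), so c is one of
  the sets intersected in sh_C A and in sh_C B.  Both shadows are nonempty and lie in
  the C-small set c, hence their C-distance is at most 1 \<le> k, contradicting
  A - C - B (k).  Discreteness of S then leaves only finitely many such C.
\<close>

lemma gdist_le_enat_iff:
  "gdist E x y \<le> enat m \<longleftrightarrow> (\<exists>n\<le>m. ((\<lambda>u v. (u,v) \<in> E) ^^ n) x y)"
proof
  let ?N = "{n. ((\<lambda>u v. (u,v) \<in> E) ^^ n) x y}"
  assume dist_le: "gdist E x y \<le> enat m"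
  show "\<exists>n\<le>m. ((\<lambda>u v. (u,v) \<in> E) ^^ n) x y"
  proof (cases "?N = {}")
    case True
    then have "gdist E x y = \<infinity>" unfolding gdist_def by (simp add: top_enat_def)
    with dist_le show ?thesis by simp
  next
    case False
    define l where "l = (LEAST n. n \<in> ?N)"
    have l_path: "l \<in> ?N" unfolding l_def using False by (auto intro: LeastI)
    have "gdist E x y = enat l"
      unfolding gdist_def
    proof (rule antisym)
      show "(INF n\<in>?N. enat n) \<le> enat l" using l_path by (rule INF_lower)
      show "enat l \<le> (INF n\<in>?N. enat n)"
        by (rule INF_greatest) (simp add: l_def Least_le)
    qed
    with dist_le l_path show ?thesis by auto
  qed
next
  assume "\<exists>n\<le>m. ((\<lambda>u v. (u,v) \<in> E) ^^ n) x y"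
  then obtain n where "n \<le> m" "((\<lambda>u v. (u,v) \<in> E) ^^ n) x y" by blast
  then have "gdist E x y \<le> enat n" unfolding gdist_def by (intro INF_lower) auto
  with \<open>n \<le> m\<close> show "gdist E x y \<le> enat m" by (meson enat_ord_simps(1) order_trans)
qed

lemma gdist_antimono: "E \<subseteq> E' \<Longrightarrow> gdist E' x y \<le> gdist E x y"
proof -
  assume "E \<subseteq> E'"
  then have "{n. ((\<lambda>u v. (u,v) \<in> E) ^^ n) x y} \<subseteq> {n. ((\<lambda>u v. (u,v) \<in> E') ^^ n) x y}"
    by (auto elim: relpowp_mono[rotated])
  then show ?thesis unfolding gdist_def by (rule INF_superset_mono) simp
qed

lemma gdist_triangle:
  assumes "gdist E x y \<le> enat m" and "gdist E y z \<le> enat n"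
  shows "gdist E x z \<le> enat (m + n)"
proof -
  obtain i where i: "i \<le> m" "((\<lambda>u v. (u,v) \<in> E) ^^ i) x y"
    using gdist_le_enat_iff[THEN iffD1, OF assms(1)] by blast
  obtain j where j: "j \<le> n" "((\<lambda>u v. (u,v) \<in> E) ^^ j) y z"
    using gdist_le_enat_iff[THEN iffD1, OF assms(2)] by blast
  have "((\<lambda>u v. (u,v) \<in> E) ^^ (i + j)) x z" using i j by (auto simp: relpowp_add)
  moreover have "i + j \<le> m + n" using i j by simp
  ultimately show ?thesis unfolding gdist_le_enat_iff by blast
qed

lemma gdist_set_le: "x \<in> a \<Longrightarrow> y \<in> b \<Longrightarrow> gdist_set E a b \<le> gdist E x y"
  unfolding gdist_set_def by (rule INF_lower2, assumption, rule INF_lower)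

lemma small_subset: "small E a \<Longrightarrow> b \<subseteq> a \<Longrightarrow> small E b"
  unfolding small_def by blast

lemma small_mono: "E \<subseteq> E' \<Longrightarrow> small E a \<Longrightarrow> small E' a"
  unfolding small_def by (meson gdist_antimono order_trans)

lemma sh_subset: "small C c \<Longrightarrow> small A (UNIV - c) \<Longrightarrow> sh C A \<subseteq> c"
  unfolding sh_def by blast

text \<open>Shadows are nonempty: if two sets from the defining family missed points p and q
  at A-distance > 4, their union (which is not everything since C is self-linked) would
  leave a point z A-close to both p and q, giving distance \<le> 2.\<close>
lemma sh_nonempty:
  assumes "admissible C" and "admissible A"
  shows "sh C A \<noteq> {}"
proof
  assume empty: "sh C A = {}"
  from assms(2) obtain p q where far: "gdist A p q > 4" unfolding admissible_def by blast
  from empty obtain a1 where a1: "small C a1" "small A (UNIV - a1)" "p \<notin> a1"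
    unfolding sh_def by blast
  from empty obtain a2 where a2: "small C a2" "small A (UNIV - a2)" "q \<notin> a2"
    unfolding sh_def by blast
  have "a1 \<union> a2 \<noteq> UNIV"
    using a1 a2 assms(1) unfolding admissible_def unlinked_def by blast
  then obtain z where z: "z \<notin> a1" "z \<notin> a2" by blast
  have "gdist A p z \<le> enat 1" using a1 z unfolding small_def one_enat_def by blast
  moreover have "gdist A z q \<le> enat 1" using a2 z unfolding small_def one_enat_def by blast
  ultimately have near: "gdist A p q \<le> enat (1 + 1)" by (rule gdist_triangle)
  from far have "enat 4 < gdist A p q" by (simp add: numeral_eq_enat)
  then have "enat 4 < enat (1 + 1)" using near by (rule order_less_le_trans)
  then show False by simp
qed

lemma admissible_Int:
  assumes "admissible A" and "admissible B"
  shows "admissible (A \<inter> B)"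
proof -
  obtain W1 where W1: "open W1" "{(x,x) | x. True} \<subseteq> W1" "W1 \<subseteq> A" "sym A"
    using assms(1) unfolding admissible_def entourage_def by blast
  obtain W2 where W2: "open W2" "{(x,x) | x. True} \<subseteq> W2" "W2 \<subseteq> B" "sym B"
    using assms(2) unfolding admissible_def entourage_def by blast
  have "entourage (A \<inter> B)"
    unfolding entourage_def using W1 W2 sym_Int
    by (intro conjI exI[of _ "W1 \<inter> W2"]) auto
  moreover have "linked (A \<inter> B) (A \<inter> B)"
  proof
    assume "unlinked (A \<inter> B) (A \<inter> B)"
    then obtain a b where "UNIV = a \<union> b" "small (A \<inter> B) a" "small (A \<inter> B) b"
      unfolding unlinked_def by blast
    then have "unlinked A A" unfolding unlinked_def by (meson inf_le1 small_mono)
    with assms(1) show False unfolding admissible_def by blast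
  qed
  moreover have "\<exists>x y. gdist (A \<inter> B) x y > 4"
  proof -
    obtain x y where "gdist A x y > 4" using assms(1) unfolding admissible_def by blast
    moreover have "gdist A x y \<le> gdist (A \<inter> B) x y" by (rule gdist_antimono) simp
    ultimately show ?thesis by (meson order_less_le_trans)
  qed
  ultimately show ?thesis unfolding admissible_def by blast
qed

text \<open>If A - C - B (k) with k \<ge> 1, then C is linked with every W contained in A and B:
  otherwise both shadows sit inside one C-small set and are C-close.\<close>
lemma between_linked:
  assumes "admissible A" "admissible B" "admissible C"
    and "between A C B k" and "k \<ge> 1"
    and "W \<subseteq> A" "W \<subseteq> B"
  shows "linked C W"
proof
  assume "unlinked C W"
  then obtain c w where cover: "UNIV = c \<union> w" and c_small: "small C c" and "small W w"
    unfolding unlinked_def by blast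
  have co_small: "small W (UNIV - c)"
    using \<open>small W w\<close> by (rule small_subset) (use cover in blast)
  have shA: "sh C A \<subseteq> c" using c_small small_mono[OF assms(6) co_small] by (rule sh_subset)
  have shB: "sh C B \<subseteq> c" using c_small small_mono[OF assms(7) co_small] by (rule sh_subset)
  obtain x where x: "x \<in> sh C A" using sh_nonempty[OF assms(3,1)] by blast
  obtain y where y: "y \<in> sh C B" using sh_nonempty[OF assms(3,2)] by blast
  have "gdist_set C (sh C A) (sh C B) \<le> gdist C x y" using x y by (rule gdist_set_le)
  also have "\<dots> \<le> 1" using c_small shA shB x y unfolding small_def by (meson subsetD)
  also have "\<dots> \<le> enat k" using assms(5) by (simp add: one_enat_def)
  finally have "\<not> enat k < gdist_set C (sh C A) (sh C B)" by (rule leD)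
  with assms(4) show False unfolding between_def by (elim conjE) (rule notE)
qed

theorem lemma3p19:
  fixes S :: "('a::t2_space \<times> 'a) set set"
  assumes "compact (UNIV :: 'a set)"
    and "\<forall>E\<in>S. admissible E"
    and "discrete_ent S"
    and "A \<in> S" and "B \<in> S"
    and "(k::nat) \<ge> 1"
  shows "finite (Psi S k A B)"
proof -
  have "admissible (A \<inter> B)" using assms(2,4,5) by (intro admissible_Int) auto
  with assms(3) have finite_linked: "finite {E \<in> S. linked E (A \<inter> B)}"
    unfolding discrete_ent_def by simp
  have "Psi S k A B \<subseteq> {E \<in> S. linked E (A \<inter> B)}"
  proof
    fix C assume "C \<in> Psi S k A B"
    then have "C \<in> S" and "between A C B k" unfolding Psi_def by auto
    with assms(2,4,5,6) have "linked C (A \<inter> B)" by (intro between_linked) auto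
    with \<open>C \<in> S\<close> show "C \<in> {E \<in> S. linked E (A \<inter> B)}" by simp
  qed
  then show ?thesis using finite_linked by (rule finite_subset)
qed

end
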